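(* Let $X$ be a nonsingular projective toric variety and $\beta\in H_2(X,\mathbb{Z})$. If the toric divisors $D$ with $\int_\beta D<0$ have nonempty common intersection, then $\beta$ is a linear combination, with nonnegative integer coefficients, of primitive curve classes.
   Context: $X$ has fan $\Delta$ in $N_{\mathbb R}$; each toric divisor $D$ corresponds to a ray generator $\rho\in N$, and toric divisors have nonempty common intersection iff their ray generators span a cone of $\Delta$ (the empty family has intersection $X$). A primitive set is a set $\{D_1,\ldots,D_k\}$ of toric divisors with empty intersection such that every proper subset has nonempty intersection. Then $\rho_1+\cdots+\rho_k$ lies in the relative interior of a unique cone $\langle\rho'_1,\ldots,\rho'_r\rangle\in\Delta$, with $\rho_1+\cdots+\rho_k=a_1\rho'_1+\cdots+a_r\rho'_r$, $a_i>0$. The associated primitive curve class is the unique $\beta\in H_2(X,\mathbb{Z})$ with $\int_\beta D_i=1$ for $i\le k$, $\int_\beta D'_j=-a_j$ for $j\le r$, and $\int_\beta D=0$ for all other toric divisors. *)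

theory Defs
  imports "HOL-Analysis.Analysis"
begin

text \<open>Lattice N = int^'n; a fan is given by its finite set of ray generators
  (primitive lattice vectors) and its set of cones, each cone being the set of
  ray generators spanning it (smooth cones are simplicial).\<close>

definition rv :: "int^'n \<Rightarrow> real^'n" where
  "rv v = (\<chi> i. real_of_int (v $ i))"

definition poscone :: "(int^'n) set \<Rightarrow> (real^'n) set" where
  "poscone S = {x. \<exists>c. (\<forall>v\<in>S. c v \<ge> 0) \<and> x = (\<Sum>v\<in>S. c v *\<^sub>R rv v)}"

definition smooth_projective_fan :: "(int^'n) set \<Rightarrow> (int^'n) set set \<Rightarrow> bool" where
  "smooth_projective_fan rays cones \<longleftrightarrow>
     finite rays \<and> (\<forall>\<sigma>\<in>cones. \<sigma> \<subseteq> rays) \<and>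
     {} \<in> cones \<and> (\<forall>\<sigma>\<in>cones. \<forall>\<tau>. \<tau> \<subseteq> \<sigma> \<longrightarrow> \<tau> \<in> cones) \<and>
     (\<forall>\<rho>\<in>rays. {\<rho>} \<in> cones) \<and>
     \<comment> \<open>nonsingular: generators of each cone extend to a Z-basis of N\<close>
     (\<forall>\<sigma>\<in>cones. \<exists>B. \<sigma> \<subseteq> B \<and> card B = CARD('n) \<and>
         (\<forall>w::int^'n. \<exists>c. w = (\<Sum>b\<in>B. c b *s b))) \<and>
     \<comment> \<open>fan: cones meet along common faces\<close>
     (\<forall>\<sigma>\<in>cones. \<forall>\<tau>\<in>cones. poscone \<sigma> \<inter> poscone \<tau> = poscone (\<sigma> \<inter> \<tau>)) \<and>
     \<comment> \<open>complete\<close>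
     (\<Union>\<sigma>\<in>cones. poscone \<sigma>) = UNIV \<and>
     \<comment> \<open>projective: strictly convex piecewise linear support function\<close>
     (\<exists>h :: int^'n \<Rightarrow> real. \<forall>\<sigma>\<in>cones. card \<sigma> = CARD('n) \<longrightarrow>
         (\<exists>m :: real^'n. (\<forall>v\<in>\<sigma>. m \<bullet> rv v = h v) \<and> (\<forall>v\<in>rays - \<sigma>. m \<bullet> rv v < h v)))"

text \<open>H_2(X,Z) is identified with integer linear relations among the ray
  generators: beta corresponds to (\<integral>_beta D_rho)_rho.\<close>
definition curve_class :: "(int^'n) set \<Rightarrow> (int^'n \<Rightarrow> int) \<Rightarrow> bool" where
  "curve_class rays \<beta> \<longleftrightarrow> (\<forall>v. v \<notin> rays \<longrightarrow> \<beta> v = 0) \<and>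
     (\<Sum>\<rho>\<in>rays. \<beta> \<rho> *s \<rho>) = 0"

definition primitive_set :: "(int^'n) set \<Rightarrow> (int^'n) set set \<Rightarrow> (int^'n) set \<Rightarrow> bool" where
  "primitive_set rays cones P \<longleftrightarrow> P \<subseteq> rays \<and> P \<notin> cones \<and> (\<forall>Q. Q \<subset> P \<longrightarrow> Q \<in> cones)"

definition primitive_class ::
    "(int^'n) set \<Rightarrow> (int^'n) set set \<Rightarrow> (int^'n) set \<Rightarrow> (int^'n \<Rightarrow> int) \<Rightarrow> bool" where
  "primitive_class rays cones P \<beta> \<longleftrightarrow>
     primitive_set rays cones P \<and> curve_class rays \<beta> \<and>
     (\<exists>\<tau>\<in>cones. \<exists>a :: int^'n \<Rightarrow> real. (\<forall>v\<in>\<tau>. a v > 0) \<and>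
        rv (\<Sum>v\<in>P. v) = (\<Sum>v\<in>\<tau>. a v *\<^sub>R rv v) \<and>
        (\<forall>v\<in>P. \<beta> v = 1) \<and> (\<forall>v\<in>\<tau>. real_of_int (\<beta> v) = - a v) \<and>
        (\<forall>v\<in>rays - P - \<tau>. \<beta> v = 0))"

end

theory Submission
  imports Defs
begin

(* Fix a strictly convex support function h and a linear function m that agrees with h on
   a maximal cone containing the negative support of beta.  The divisor w = h - m is nef,
   vanishes on that negative support, and has positive degree on every primitive class,
   because a primitive set never lies in a maximal cone, where h - m vanishes.  If gamma is
   a nonzero curve class whose negative support lies in a cone, its positive support cannot
   be a cone (the relation sum gamma_rho rho = 0 would equate points of the relative
   interiors of two disjoint cones), so it contains a primitive set P.  Subtracting the
   primitive class of P keeps the negative support inside the old one and lowers the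
   w-degree by at least the minimum over the finitely many primitive classes, while the
   w-degree stays nonnegative; hence the subtraction reaches 0 after finitely many steps.
   Smoothness enters through integrality: the sum of a primitive set has integer
   coordinates in the cone containing it in its relative interior, so primitive classes
   are integral. *)

section \<open>Lattice points and polyhedral cones\<close>

lemma rv_add: "rv (a + b) = rv a + rv b"
  by (simp add: rv_def vec_eq_iff)

lemma rv_sum: "rv (\<Sum>x\<in>S. f x) = (\<Sum>x\<in>S. rv (f x))"
  by (simp add: rv_def vec_eq_iff)

lemma rv_lincomb: "rv (\<Sum>x\<in>S. c x *s x) = (\<Sum>x\<in>S. of_int (c x) *\<^sub>R rv x)"
  by (simp add: rv_def vec_eq_iff)

lemma rv_zero [simp]: "rv 0 = 0"
  by (simp add: rv_def vec_eq_iff)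

lemma rv_eq_iff: "rv a = rv b \<longleftrightarrow> a = b"
  by (simp add: rv_def vec_eq_iff)

lemma rv_axis: "rv (axis i (1::int)) = axis i (1::real)"
  by (simp add: rv_def vec_eq_iff axis_def)

lemma lincomb_in_poscone:
  assumes "\<And>v. v \<in> S \<Longrightarrow> c v \<ge> 0"
  shows "(\<Sum>v\<in>S. c v *\<^sub>R rv v) \<in> poscone S"
  using assms unfolding poscone_def by blast

lemma poscone_empty [simp]: "poscone {} = {0}"
  by (auto simp: poscone_def)

lemma rv_in_poscone:
  assumes "finite S" "v \<in> S"
  shows "rv v \<in> poscone S"
proof -
  have "(\<Sum>u\<in>S. (if u = v then 1 else 0) *\<^sub>R rv u) = (\<Sum>u\<in>S. if u = v then rv u else 0)"
    by (rule sum.cong) auto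
  also have "\<dots> = rv v"
    using assms by simp
  finally have "(\<Sum>u\<in>S. (if u = v then 1 else 0) *\<^sub>R rv u) = rv v" .
  then show ?thesis
    using lincomb_in_poscone[of S "\<lambda>u. if u = v then 1 else 0"] by simp
qed

lemma convex_cone_poscone: "convex_cone (poscone S)"
  unfolding convex_cone_iff
proof (intro conjI ballI allI impI)
  show "0 \<in> poscone S"
    using lincomb_in_poscone[of S "\<lambda>_. 0"] by simp
next
  fix x y assume "x \<in> poscone S" "y \<in> poscone S"
  then obtain c d where "\<forall>v\<in>S. c v \<ge> 0" "x = (\<Sum>v\<in>S. c v *\<^sub>R rv v)"
    "\<forall>v\<in>S. d v \<ge> 0" "y = (\<Sum>v\<in>S. d v *\<^sub>R rv v)"
    unfolding poscone_def by blast
  then show "x + y \<in> poscone S"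
    using lincomb_in_poscone[of S "\<lambda>v. c v + d v"] by (simp add: scaleR_add_left sum.distrib)
next
  fix x and e :: real assume "x \<in> poscone S" "e \<ge> 0"
  then obtain c where "\<forall>v\<in>S. c v \<ge> 0" "x = (\<Sum>v\<in>S. c v *\<^sub>R rv v)"
    unfolding poscone_def by blast
  then show "e *\<^sub>R x \<in> poscone S"
    using \<open>e \<ge> 0\<close> lincomb_in_poscone[of S "\<lambda>v. e * c v"] by (simp add: scaleR_sum_right)
qed

lemma convex_cone_nonneg_lincomb:
  assumes "convex_cone K" "finite S" "\<And>v. v \<in> S \<Longrightarrow> c v \<ge> 0" "\<And>v. v \<in> S \<Longrightarrow> x v \<in> K"
  shows "(\<Sum>v\<in>S. c v *\<^sub>R x v) \<in> K"
  using assms(2-)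
  by (induction S rule: finite_induct)
    (auto simp: convex_cone_contains_0[OF assms(1)]
      intro!: convex_cone_add[OF assms(1)] convex_cone_scaleR[OF assms(1)])

lemma poscone_eq_convex_cone_hull:
  assumes "finite S"
  shows "poscone S = convex_cone hull (rv ` S)"
proof
  show "poscone S \<subseteq> convex_cone hull (rv ` S)"
    unfolding poscone_def
    by (clarify, rule convex_cone_nonneg_lincomb[OF convex_cone_convex_cone_hull assms])
      (auto intro: hull_inc)
  show "convex_cone hull (rv ` S) \<subseteq> poscone S"
    by (rule hull_minimal) (use assms rv_in_poscone convex_cone_poscone in auto)
qed

lemma closed_poscone: "finite S \<Longrightarrow> closed (poscone S)"
  by (simp add: poscone_eq_convex_cone_hull closed_convex_cone_hull)

lemma poscone_subset_span: "poscone S \<subseteq> span (rv ` S)"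
  unfolding poscone_def by (clarsimp, intro span_sum span_scale span_base imageI)

lemma sum_scaleR_zero_extension:
  fixes x :: "'a \<Rightarrow> 'b::real_vector"
  assumes "finite B" "S \<subseteq> B"
  shows "(\<Sum>b\<in>B. (if b \<in> S then f b else 0) *\<^sub>R x b) = (\<Sum>b\<in>S. f b *\<^sub>R x b)"
proof -
  have "(\<Sum>b\<in>B. (if b \<in> S then f b else 0) *\<^sub>R x b) = (\<Sum>b\<in>B. if b \<in> S then f b *\<^sub>R x b else 0)"
    by (rule sum.cong) auto
  also have "\<dots> = (\<Sum>b\<in>S. f b *\<^sub>R x b)"
    using assms by (simp add: sum.inter_restrict[symmetric] Int_absorb1)
  finally show ?thesis .
qed

lemma lattice_spanning_set_independent:
  fixes B :: "(int^'n) set"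
  assumes "finite B" "card B = CARD('n)" "\<forall>w. \<exists>c. w = (\<Sum>b\<in>B. c b *s b)"
    and "(\<Sum>b\<in>B. f b *\<^sub>R rv b) = 0" "b \<in> B"
  shows "f b = 0"
proof -
  have inj: "inj_on rv B"
    by (simp add: inj_on_def rv_eq_iff)
  have "rv w \<in> span (rv ` B)" for w
  proof -
    obtain c where "w = (\<Sum>b\<in>B. c b *s b)"
      using assms(3) by blast
    then show ?thesis
      by (simp add: rv_lincomb span_sum span_scale span_base)
  qed
  then have "Basis \<subseteq> span (rv ` B)"
    by (metis (no_types, lifting) axis_inverse rv_axis subsetI)
  then have "UNIV \<subseteq> span (rv ` B)"
    by (metis span_Basis span_mono span_span)
  then have "independent (rv ` B)"
    using assms(1,2) by (intro card_le_dim_spanning[of _ UNIV]) (auto simp: card_image[OF inj])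
  moreover have "(\<Sum>y\<in>rv ` B. f (inv_into B rv y) *\<^sub>R y) = 0"
    using assms(4) by (simp add: sum.reindex[OF inj] inv_into_f_f[OF inj])
  ultimately have "f (inv_into B rv (rv b)) = 0"
    using assms(5) unfolding independent_explicit by (auto dest!: spec[of _ "\<lambda>y. f (inv_into B rv y)"])
  then show ?thesis
    using assms(5) by (simp add: inv_into_f_f[OF inj])
qed

section \<open>Curve classes and primitive classes\<close>

text \<open>The intersection number of a curve class with the \<real>-divisor \<open>\<Sum>\<^sub>\<rho> w \<rho> D\<^sub>\<rho>\<close>.\<close>

definition divisor_degree :: "'a set \<Rightarrow> ('a \<Rightarrow> real) \<Rightarrow> ('a \<Rightarrow> int) \<Rightarrow> real" where
  "divisor_degree rays w \<gamma> = (\<Sum>\<rho>\<in>rays. of_int (\<gamma> \<rho>) * w \<rho>)"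

lemma divisor_degree_diff:
  "divisor_degree rays w (\<lambda>\<rho>. \<gamma> \<rho> - c \<rho>) = divisor_degree rays w \<gamma> - divisor_degree rays w c"
  unfolding divisor_degree_def by (simp add: left_diff_distrib sum_subtractf)

lemma divisor_degree_nonneg:
  assumes "\<And>\<rho>. \<rho> \<in> rays \<Longrightarrow> w \<rho> \<ge> 0" "\<And>\<rho>. \<rho> \<in> rays \<Longrightarrow> \<gamma> \<rho> < 0 \<Longrightarrow> w \<rho> = 0"
  shows "divisor_degree rays w \<gamma> \<ge> 0"
  unfolding divisor_degree_def
proof (rule sum_nonneg)
  fix \<rho> assume "\<rho> \<in> rays"
  then show "of_int (\<gamma> \<rho>) * w \<rho> \<ge> 0"
    using assms by (cases "\<gamma> \<rho> < 0") simp_all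
qed

text \<open>Principal divisors have degree zero.\<close>

lemma divisor_degree_diff_linear:
  assumes "curve_class rays \<gamma>"
  shows "divisor_degree rays (\<lambda>\<rho>. w \<rho> - m \<bullet> rv \<rho>) \<gamma> = divisor_degree rays w \<gamma>"
proof -
  have "(\<Sum>\<rho>\<in>rays. of_int (\<gamma> \<rho>) * (m \<bullet> rv \<rho>)) = m \<bullet> rv (\<Sum>\<rho>\<in>rays. \<gamma> \<rho> *s \<rho>)"
    by (simp add: rv_lincomb inner_sum_right)
  also have "\<dots> = 0"
    using assms unfolding curve_class_def by simp
  finally show ?thesis
    unfolding divisor_degree_def by (simp add: right_diff_distrib sum_subtractf)
qed

lemma curve_class_diff:
  assumes "curve_class rays \<gamma>" "curve_class rays c"
  shows "curve_class rays (\<lambda>\<rho>. \<gamma> \<rho> - c \<rho>)"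
  using assms unfolding curve_class_def by (simp add: vector_sub_rdistrib sum_subtractf)

lemma primitive_classE:
  assumes "primitive_class rays cones P c"
  obtains \<tau> where "primitive_set rays cones P" "curve_class rays c" "\<tau> \<in> cones"
    "\<And>v. v \<in> P \<Longrightarrow> c v = 1" "\<And>v. v \<in> \<tau> \<Longrightarrow> c v < 0" "\<And>v. v \<in> rays - P - \<tau> \<Longrightarrow> c v = 0"
proof -
  have P: "primitive_set rays cones P" and c: "curve_class rays c"
    using assms unfolding primitive_class_def by simp_all
  obtain \<tau> and a :: "_ \<Rightarrow> real" where \<tau>: "\<tau> \<in> cones" "\<forall>v\<in>\<tau>. a v > 0" "\<forall>v\<in>P. c v = 1"
      "\<forall>v\<in>\<tau>. of_int (c v) = - a v" "\<forall>v\<in>rays - P - \<tau>. c v = 0"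
    using assms unfolding primitive_class_def by blast
  show thesis
  proof (rule that[OF P c \<tau>(1)])
    show "c v < 0" if "v \<in> \<tau>" for v
      using that \<tau>(2,4) by fastforce
  qed (use \<tau>(3,5) in simp_all)
qed

lemma curve_class_subtract_primitive_class:
  assumes "curve_class rays \<gamma>" "primitive_class rays cones P c" "\<And>\<rho>. \<rho> \<in> P \<Longrightarrow> \<gamma> \<rho> > 0"
  shows "curve_class rays (\<lambda>\<rho>. \<gamma> \<rho> - c \<rho>)"
    and "{\<rho>\<in>rays. \<gamma> \<rho> - c \<rho> < 0} \<subseteq> {\<rho>\<in>rays. \<gamma> \<rho> < 0}"
proof -
  obtain \<tau> where c: "curve_class rays c"
      "\<And>v. v \<in> P \<Longrightarrow> c v = 1" "\<And>v. v \<in> \<tau> \<Longrightarrow> c v < 0" "\<And>v. v \<in> rays - P - \<tau> \<Longrightarrow> c v = 0"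
    by (rule primitive_classE[OF assms(2)]) (rule that)
  show "curve_class rays (\<lambda>\<rho>. \<gamma> \<rho> - c \<rho>)"
    using assms(1) c(1) by (rule curve_class_diff)
  have "\<gamma> \<rho> < 0" if "\<rho> \<in> rays" "\<gamma> \<rho> - c \<rho> < 0" for \<rho>
  proof (cases "\<rho> \<in> P")
    case True
    then show ?thesis
      using that assms(3) c(2) by force
  next
    case False
    then have "c \<rho> \<le> 0"
      using that(1) c(3,4) by (cases "\<rho> \<in> \<tau>") force+
    then show ?thesis
      using that(2) by linarith
  qed
  then show "{\<rho>\<in>rays. \<gamma> \<rho> - c \<rho> < 0} \<subseteq> {\<rho>\<in>rays. \<gamma> \<rho> < 0}"
    by blast
qed

lemma non_cone_contains_primitive_set:
  assumes "finite S" "S \<subseteq> rays" "S \<notin> cones"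
  obtains P where "P \<subseteq> S" "primitive_set rays cones P"
proof -
  obtain P where P: "P \<in> {P. P \<subseteq> S \<and> P \<notin> cones}"
      "\<And>Q. Q \<in> {P. P \<subseteq> S \<and> P \<notin> cones} \<Longrightarrow> Q \<subseteq> P \<Longrightarrow> P = Q"
    using finite_has_minimal2[of "{P. P \<subseteq> S \<and> P \<notin> cones}" S] assms by auto
  then have "primitive_set rays cones P"
    unfolding primitive_set_def using assms(2) by blast
  then show thesis
    using that P(1) by blast
qed

lemma nonneg_int_combination_by_descent:
  fixes C :: "('a \<Rightarrow> int) set" and D :: "('a \<Rightarrow> int) \<Rightarrow> real"
  assumes "finite C"
    and D_nonneg: "\<And>\<gamma>. Q \<gamma> \<Longrightarrow> D \<gamma> \<ge> 0"
    and D_pos: "\<And>c. c \<in> C \<Longrightarrow> D c > 0"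
    and D_diff: "\<And>\<gamma> c. D (\<lambda>x. \<gamma> x - c x) = D \<gamma> - D c"
    and descent: "\<And>\<gamma>. Q \<gamma> \<Longrightarrow> \<gamma> \<noteq> (\<lambda>_. 0) \<Longrightarrow> \<exists>c\<in>C. Q (\<lambda>x. \<gamma> x - c x)"
    and "Q \<gamma>"
  shows "\<exists>k. \<gamma> = (\<lambda>x. \<Sum>c\<in>C. int (k c) * c x)"
proof -
  define \<delta> where "\<delta> = Min (insert 1 (D ` C))"
  have "\<delta> > 0"
    unfolding \<delta>_def using assms(1) D_pos by (subst Min_gr_iff) auto
  have \<delta>_le: "\<delta> \<le> D c" if "c \<in> C" for c
    unfolding \<delta>_def using assms(1) that by (intro Min_le) auto
  show ?thesis
    using \<open>Q \<gamma>\<close>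
  proof (induction "nat \<lfloor>D \<gamma> / \<delta>\<rfloor>" arbitrary: \<gamma> rule: less_induct)
    case less
    show ?case
    proof (cases "\<gamma> = (\<lambda>_. 0)")
      case True
      then show ?thesis
        by (intro exI[of _ "\<lambda>_. 0"]) simp
    next
      case False
      then obtain c where c: "c \<in> C" "Q (\<lambda>x. \<gamma> x - c x)"
        using descent less.prems by blast
      have "D (\<lambda>x. \<gamma> x - c x) \<le> D \<gamma> - \<delta>"
        using \<delta>_le[OF c(1)] D_diff[of \<gamma> c] by linarith
      then have "D (\<lambda>x. \<gamma> x - c x) / \<delta> \<le> (D \<gamma> - \<delta>) / \<delta>"
        using \<open>\<delta> > 0\<close> by (simp add: divide_right_mono)
      also have "\<dots> = D \<gamma> / \<delta> - 1"
        using \<open>\<delta> > 0\<close> by (simp add: diff_divide_distrib)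
      finally have "D (\<lambda>x. \<gamma> x - c x) / \<delta> \<le> D \<gamma> / \<delta> - 1" .
      moreover have "D (\<lambda>x. \<gamma> x - c x) / \<delta> \<ge> 0"
        using D_nonneg[OF c(2)] \<open>\<delta> > 0\<close> by simp
      ultimately have "nat \<lfloor>D (\<lambda>x. \<gamma> x - c x) / \<delta>\<rfloor> < nat \<lfloor>D \<gamma> / \<delta>\<rfloor>"
        by linarith
      then obtain k where k: "(\<lambda>x. \<gamma> x - c x) = (\<lambda>x. \<Sum>d\<in>C. int (k d) * d x)"
        using less.hyps c(2) by blast
      have "\<gamma> x = (\<Sum>d\<in>C. int ((k(c := Suc (k c))) d) * d x)" for x
      proof -
        have "(\<Sum>d\<in>C. int ((k(c := Suc (k c))) d) * d x)
            = (\<Sum>d\<in>C. int (k d) * d x + (if d = c then c x else 0))"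
          by (rule sum.cong) (auto simp: distrib_right)
        also have "\<dots> = (\<Sum>d\<in>C. int (k d) * d x) + c x"
          using assms(1) c(1) by (simp add: sum.distrib)
        finally have "(\<Sum>d\<in>C. int ((k(c := Suc (k c))) d) * d x) = (\<Sum>d\<in>C. int (k d) * d x) + c x" .
        then show ?thesis
          using fun_cong[OF k, of x] by simp
      qed
      then show ?thesis
        by blast
    qed
  qed
qed

section \<open>Smooth projective fans\<close>

definition strictly_convex_support ::
    "(int^'n) set \<Rightarrow> (int^'n) set set \<Rightarrow> (int^'n \<Rightarrow> real) \<Rightarrow> bool" where
  "strictly_convex_support rays cones h \<longleftrightarrow>
     (\<forall>\<sigma>\<in>cones. card \<sigma> = CARD('n) \<longrightarrow>
        (\<exists>m. (\<forall>v\<in>\<sigma>. m \<bullet> rv v = h v) \<and> (\<forall>v\<in>rays - \<sigma>. m \<bullet> rv v < h v)))"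

context
  fixes rays :: "(int^'n) set" and cones :: "(int^'n) set set"
  assumes fan: "smooth_projective_fan rays cones"
begin

lemma finite_rays: "finite rays"
  using fan unfolding smooth_projective_fan_def by (elim conjE)

lemma cone_subset_rays: "\<sigma> \<in> cones \<Longrightarrow> \<sigma> \<subseteq> rays"
  using fan unfolding smooth_projective_fan_def by (elim conjE) simp

lemma finite_cone: "\<sigma> \<in> cones \<Longrightarrow> finite \<sigma>"
  using cone_subset_rays finite_rays finite_subset by blast

lemma finite_cones: "finite cones"
proof (rule finite_subset)
  show "cones \<subseteq> Pow rays"
    using cone_subset_rays by blast
  show "finite (Pow rays)"
    using finite_rays by simp
qed

lemma empty_in_cones: "{} \<in> cones"
  using fan unfolding smooth_projective_fan_def by (elim conjE)

lemma face_in_cones: "\<sigma> \<in> cones \<Longrightarrow> \<tau> \<subseteq> \<sigma> \<Longrightarrow> \<tau> \<in> cones"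
  using fan unfolding smooth_projective_fan_def by (elim conjE) simp

lemma poscone_Int: "\<sigma> \<in> cones \<Longrightarrow> \<tau> \<in> cones \<Longrightarrow> poscone \<sigma> \<inter> poscone \<tau> = poscone (\<sigma> \<inter> \<tau>)"
  using fan unfolding smooth_projective_fan_def by (elim conjE) simp

lemma poscones_cover: obtains \<sigma> where "\<sigma> \<in> cones" "x \<in> poscone \<sigma>"
proof -
  have "(\<Union>\<sigma>\<in>cones. poscone \<sigma>) = UNIV"
    using fan unfolding smooth_projective_fan_def by (elim conjE)
  then show thesis
    using that by blast
qed

lemma exists_strictly_convex_support: obtains h where "strictly_convex_support rays cones h"
  using fan unfolding smooth_projective_fan_def strictly_convex_support_def by (elim conjE exE)

lemma cone_extends_to_lattice_basis:
  assumes "\<sigma> \<in> cones"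
  obtains B where "\<sigma> \<subseteq> B" "finite B" "card B = CARD('n)" "\<forall>w. \<exists>c. w = (\<Sum>b\<in>B. c b *s b)"
proof -
  have "\<forall>\<sigma>\<in>cones. \<exists>B. \<sigma> \<subseteq> B \<and> card B = CARD('n) \<and> (\<forall>w::int^'n. \<exists>c. w = (\<Sum>b\<in>B. c b *s b))"
    using fan unfolding smooth_projective_fan_def by (elim conjE)
  then obtain B where "\<sigma> \<subseteq> B" "card B = CARD('n)" "\<forall>w. \<exists>c. w = (\<Sum>b\<in>B. c b *s b)"
    using assms by blast
  moreover have "finite B"
    by (rule card_ge_0_finite) (simp add: \<open>card B = CARD('n)\<close>)
  ultimately show thesis
    using that by blast
qed

lemma cone_coeffs_unique:
  assumes "\<sigma> \<in> cones" "(\<Sum>v\<in>\<sigma>. f v *\<^sub>R rv v) = (\<Sum>v\<in>\<sigma>. g v *\<^sub>R rv v)" "v \<in> \<sigma>"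
  shows "f v = g v"
proof -
  obtain B where B: "\<sigma> \<subseteq> B" "finite B" "card B = CARD('n)" "\<forall>w. \<exists>c. w = (\<Sum>b\<in>B. c b *s b)"
    by (rule cone_extends_to_lattice_basis[OF assms(1)])
  have "(\<Sum>b\<in>B. (if b \<in> \<sigma> then f b - g b else 0) *\<^sub>R rv b) = (\<Sum>b\<in>\<sigma>. (f b - g b) *\<^sub>R rv b)"
    using B(2,1) by (rule sum_scaleR_zero_extension)
  also have "\<dots> = 0"
    using assms(2) by (simp add: scaleR_diff_left sum_subtractf)
  finally have "(\<Sum>b\<in>B. (if b \<in> \<sigma> then f b - g b else 0) *\<^sub>R rv b) = 0" .
  from lattice_spanning_set_independent[OF B(2-4) this subsetD[OF B(1) assms(3)]] show ?thesis
    using assms(3) by simp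
qed

lemma cone_coeffs_integral:
  assumes "\<sigma> \<in> cones" "rv x = (\<Sum>v\<in>\<sigma>. a v *\<^sub>R rv v)" "v \<in> \<sigma>"
  shows "a v \<in> \<int>"
proof -
  obtain B where B: "\<sigma> \<subseteq> B" "finite B" "card B = CARD('n)" "\<forall>w. \<exists>c. w = (\<Sum>b\<in>B. c b *s b)"
    by (rule cone_extends_to_lattice_basis[OF assms(1)])
  obtain c where c: "x = (\<Sum>b\<in>B. c b *s b)"
    using B(4) by blast
  have "(\<Sum>b\<in>B. ((if b \<in> \<sigma> then a b else 0) - of_int (c b)) *\<^sub>R rv b)
      = (\<Sum>b\<in>\<sigma>. a b *\<^sub>R rv b) - rv x"
    using sum_scaleR_zero_extension[OF B(2,1), of a rv] c
    by (simp add: scaleR_diff_left sum_subtractf rv_lincomb)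
  also have "\<dots> = 0"
    using assms(2) by simp
  finally have "(\<Sum>b\<in>B. ((if b \<in> \<sigma> then a b else 0) - of_int (c b)) *\<^sub>R rv b) = 0" .
  from lattice_spanning_set_independent[OF B(2-4) this subsetD[OF B(1) assms(3)]] show ?thesis
    using assms(3) by simp
qed

lemma relint_in_poscone_imp_subset:
  assumes "\<sigma> \<in> cones" "\<tau> \<in> cones" "\<And>v. v \<in> \<sigma> \<Longrightarrow> a v > 0"
    and "(\<Sum>v\<in>\<sigma>. a v *\<^sub>R rv v) \<in> poscone \<tau>"
  shows "\<sigma> \<subseteq> \<tau>"
proof
  fix v assume v: "v \<in> \<sigma>"
  have "(\<Sum>v\<in>\<sigma>. a v *\<^sub>R rv v) \<in> poscone \<sigma>"
    using assms(3) by (intro lincomb_in_poscone) (simp add: less_imp_le)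
  then have "(\<Sum>v\<in>\<sigma>. a v *\<^sub>R rv v) \<in> poscone (\<sigma> \<inter> \<tau>)"
    using assms(4) poscone_Int[OF assms(1,2)] by blast
  then obtain e where "(\<Sum>v\<in>\<sigma>. a v *\<^sub>R rv v) = (\<Sum>u\<in>\<sigma> \<inter> \<tau>. e u *\<^sub>R rv u)"
    unfolding poscone_def by blast
  also have "\<dots> = (\<Sum>u\<in>\<sigma>. (if u \<in> \<sigma> \<inter> \<tau> then e u else 0) *\<^sub>R rv u)"
    using finite_cone[OF assms(1)] by (intro sum_scaleR_zero_extension[symmetric]) auto
  finally have "a v = (if v \<in> \<sigma> \<inter> \<tau> then e v else 0)"
    by (rule cone_coeffs_unique[OF assms(1) _ v])
  then show "v \<in> \<tau>"
    using assms(3)[OF v] by (auto split: if_splits)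
qed

lemma exists_maximal_cone:
  assumes "\<sigma> \<in> cones"
  obtains \<sigma>' where "\<sigma>' \<in> cones" "\<sigma> \<subseteq> \<sigma>'" "\<And>\<tau>. \<tau> \<in> cones \<Longrightarrow> \<sigma>' \<subseteq> \<tau> \<Longrightarrow> \<tau> = \<sigma>'"
proof -
  obtain \<sigma>' where "\<sigma>' \<in> cones" "\<sigma> \<subseteq> \<sigma>'" "\<forall>\<tau>\<in>cones. \<sigma>' \<subseteq> \<tau> \<longrightarrow> \<sigma>' = \<tau>"
    using finite_has_maximal2[OF finite_cones assms] by blast
  then show thesis
    by (intro that) auto
qed

text \<open>Points near the barycenter of a maximal cone lie in no other cone, so the cone
  has nonempty interior and hence full dimension.\<close>

lemma maximal_cone_card:
  assumes "\<sigma> \<in> cones" and maximal: "\<And>\<tau>. \<tau> \<in> cones \<Longrightarrow> \<sigma> \<subseteq> \<tau> \<Longrightarrow> \<tau> = \<sigma>"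
  shows "card \<sigma> = CARD('n)"
proof (rule antisym)
  obtain B where "\<sigma> \<subseteq> B" "finite B" "card B = CARD('n)"
    by (rule cone_extends_to_lattice_basis[OF assms(1)])
  then show "card \<sigma> \<le> CARD('n)"
    using card_mono[of B \<sigma>] by simp
next
  define U where "U = - (\<Union>\<tau>\<in>cones - {\<sigma>}. poscone \<tau>)"
  have "closed (poscone \<tau>)" if "\<tau> \<in> cones" for \<tau>
    using closed_poscone[OF finite_cone[OF that]] .
  then have "open U"
    unfolding U_def using finite_cones by (intro open_Compl closed_UN) auto
  moreover have "(\<Sum>v\<in>\<sigma>. 1 *\<^sub>R rv v) \<in> U"
  proof -
    have "\<tau> = \<sigma>" if "\<tau> \<in> cones" "(\<Sum>v\<in>\<sigma>. 1 *\<^sub>R rv v) \<in> poscone \<tau>" for \<tau>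
    proof (rule maximal[OF that(1)])
      show "\<sigma> \<subseteq> \<tau>"
        using relint_in_poscone_imp_subset[OF assms(1) that(1), of "\<lambda>_. 1"] that(2) by simp
    qed
    then show ?thesis
      unfolding U_def by blast
  qed
  moreover have "U \<subseteq> span (rv ` \<sigma>)"
  proof
    fix y assume "y \<in> U"
    obtain \<tau> where "\<tau> \<in> cones" "y \<in> poscone \<tau>"
      by (rule poscones_cover)
    with \<open>y \<in> U\<close> have "y \<in> poscone \<sigma>"
      unfolding U_def by blast
    then show "y \<in> span (rv ` \<sigma>)"
      using poscone_subset_span by blast
  qed
  ultimately have "int CARD('n) \<le> aff_dim (span (rv ` \<sigma>))"
    using aff_dim_open[of U] aff_dim_subset[of U "span (rv ` \<sigma>)"] by force
  also have "\<dots> = int (dim (rv ` \<sigma>))"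
    by (simp add: aff_dim_subspace)
  also have "\<dots> \<le> int (card \<sigma>)"
    using dim_le_card'[of "rv ` \<sigma>"] card_image_le[of \<sigma> rv] finite_cone[OF assms(1)] by simp
  finally show "CARD('n) \<le> card \<sigma>"
    by simp
qed

lemma cone_subset_full_cone:
  assumes "\<sigma> \<in> cones"
  obtains \<sigma>' where "\<sigma>' \<in> cones" "\<sigma> \<subseteq> \<sigma>'" "card \<sigma>' = CARD('n)"
  using exists_maximal_cone[OF assms] maximal_cone_card by metis

lemma strictly_convex_support_on_cone:
  assumes "strictly_convex_support rays cones h" "\<sigma> \<in> cones"
  obtains \<sigma>' m where "\<sigma>' \<in> cones" "\<sigma> \<subseteq> \<sigma>'"
    "\<And>v. v \<in> \<sigma>' \<Longrightarrow> m \<bullet> rv v = h v" "\<And>v. v \<in> rays - \<sigma>' \<Longrightarrow> m \<bullet> rv v < h v"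
proof -
  obtain \<sigma>' where "\<sigma>' \<in> cones" "\<sigma> \<subseteq> \<sigma>'" "card \<sigma>' = CARD('n)"
    using cone_subset_full_cone[OF assms(2)] by blast
  with assms(1) show thesis
    using that unfolding strictly_convex_support_def by blast
qed

lemma lattice_point_relint_coords:
  fixes x :: "int^'n"
  obtains \<tau> n where "\<tau> \<in> cones" "\<And>v. v \<in> \<tau> \<Longrightarrow> n v > 0" "x = (\<Sum>v\<in>\<tau>. n v *s v)"
proof -
  obtain \<sigma> where \<sigma>: "\<sigma> \<in> cones" "rv x \<in> poscone \<sigma>"
    using poscones_cover by blast
  then obtain c where c: "\<forall>v\<in>\<sigma>. c v \<ge> 0" "rv x = (\<Sum>v\<in>\<sigma>. c v *\<^sub>R rv v)"
    unfolding poscone_def by blast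
  define \<tau> where "\<tau> = {v\<in>\<sigma>. c v > 0}"
  have \<tau>: "\<tau> \<in> cones"
    unfolding \<tau>_def by (rule face_in_cones[OF \<sigma>(1)]) auto
  have x\<tau>: "rv x = (\<Sum>v\<in>\<tau>. c v *\<^sub>R rv v)"
    unfolding c(2) \<tau>_def using c(1) finite_cone[OF \<sigma>(1)]
    by (intro sum.mono_neutral_right) auto
  define n where "n v = \<lfloor>c v\<rfloor>" for v
  have cn: "c v = of_int (n v)" if "v \<in> \<tau>" for v
    using cone_coeffs_integral[OF \<tau> x\<tau> that] unfolding n_def by simp
  have "x = (\<Sum>v\<in>\<tau>. n v *s v)"
    unfolding rv_eq_iff[symmetric] rv_lincomb x\<tau> using cn by (intro sum.cong) auto
  moreover have "n v > 0" if "v \<in> \<tau>" for v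
    using cn[OF that] that unfolding \<tau>_def by simp
  ultimately show thesis
    using that \<tau> by blast
qed

lemma primitive_set_disjoint_relint_cone:
  assumes P: "primitive_set rays cones P"
    and \<tau>: "\<tau> \<in> cones" "\<And>v. v \<in> \<tau> \<Longrightarrow> n v > 0" "(\<Sum>v\<in>P. v) = (\<Sum>v\<in>\<tau>. n v *s v)"
  shows "P \<inter> \<tau> = {}"
proof (rule ccontr)
  assume "P \<inter> \<tau> \<noteq> {}"
  then obtain v where v: "v \<in> P" "v \<in> \<tau>"
    by blast
  have "finite P"
    using P finite_rays finite_subset unfolding primitive_set_def by blast
  have Q: "P - {v} \<in> cones"
    using P v(1) unfolding primitive_set_def by blast
  have "(\<Sum>u\<in>P - {v}. 1 *\<^sub>R rv u) = rv (\<Sum>u\<in>P. u) - rv v"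
    using sum.remove[OF \<open>finite P\<close> v(1), of id] by (simp add: rv_sum rv_add)
  also have "\<dots> = (\<Sum>u\<in>\<tau>. (of_int (n u) - (if u = v then 1 else 0)) *\<^sub>R rv u)"
    using finite_cone[OF \<tau>(1)] v(2)
    by (simp add: \<tau>(3) rv_lincomb scaleR_diff_left sum_subtractf if_distrib[of "\<lambda>c. c *\<^sub>R _"]
        sum.delta' cong: if_cong)
  moreover have "of_int (n u) - (if u = v then 1 else 0) \<ge> (0::real)" if "u \<in> \<tau>" for u
    using \<tau>(2)[OF that] by (cases "u = v") simp_all
  ultimately have "(\<Sum>u\<in>P - {v}. 1 *\<^sub>R rv u) \<in> poscone \<tau>"
    by (simp add: lincomb_in_poscone)
  from relint_in_poscone_imp_subset[OF Q \<tau>(1) _ this] have "P - {v} \<subseteq> \<tau>"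
    by simp
  then have "P \<in> cones"
    using face_in_cones[OF \<tau>(1), of P] v(2) by blast
  then show False
    using P unfolding primitive_set_def by blast
qed

lemma primitive_class_exists:
  assumes P: "primitive_set rays cones P"
  obtains c where "primitive_class rays cones P c"
proof -
  obtain \<tau> n where \<tau>: "\<tau> \<in> cones" "\<And>v. v \<in> \<tau> \<Longrightarrow> n v > 0" "(\<Sum>v\<in>P. v) = (\<Sum>v\<in>\<tau>. n v *s v)"
    using lattice_point_relint_coords by blast
  have disj: "P \<inter> \<tau> = {}"
    using primitive_set_disjoint_relint_cone[OF P \<tau>] .
  have P_rays: "P \<subseteq> rays" and \<tau>_rays: "\<tau> \<subseteq> rays"
    using P cone_subset_rays[OF \<tau>(1)] unfolding primitive_set_def by auto
  define c where "c \<rho> = (if \<rho> \<in> P then 1 else if \<rho> \<in> \<tau> then - n \<rho> else 0)" for \<rho>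
  have "(\<Sum>\<rho>\<in>rays. c \<rho> *s \<rho>)
      = (\<Sum>\<rho>\<in>rays. if \<rho> \<in> P then \<rho> else 0) - (\<Sum>\<rho>\<in>rays. if \<rho> \<in> \<tau> then n \<rho> *s \<rho> else 0)"
    unfolding sum_subtractf[symmetric] using disj by (intro sum.cong) (auto simp: c_def vec_eq_iff)
  also have "\<dots> = 0"
    using finite_rays P_rays \<tau>_rays \<tau>(3)
    by (simp add: sum.inter_restrict[symmetric] Int_absorb1)
  finally have "curve_class rays c"
    unfolding curve_class_def using P_rays \<tau>_rays by (auto simp: c_def)
  then have "primitive_class rays cones P c"
    unfolding primitive_class_def using P \<tau> disj
    by (intro conjI bexI[of _ \<tau>] exI[of _ "\<lambda>v. of_int (n v)"])
      (auto simp: c_def rv_lincomb)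
  then show thesis
    using that by blast
qed

lemma primitive_class_degree_pos:
  assumes "strictly_convex_support rays cones h" "primitive_class rays cones P c"
  shows "divisor_degree rays h c > 0"
proof -
  obtain \<tau> where P: "primitive_set rays cones P" and c: "curve_class rays c" "\<tau> \<in> cones"
      "\<And>v. v \<in> P \<Longrightarrow> c v = 1" "\<And>v. v \<in> \<tau> \<Longrightarrow> c v < 0" "\<And>v. v \<in> rays - P - \<tau> \<Longrightarrow> c v = 0"
    by (rule primitive_classE[OF assms(2)]) (rule that)
  obtain \<sigma> m where \<sigma>: "\<sigma> \<in> cones" "\<tau> \<subseteq> \<sigma>"
      "\<And>v. v \<in> \<sigma> \<Longrightarrow> m \<bullet> rv v = h v" "\<And>v. v \<in> rays - \<sigma> \<Longrightarrow> m \<bullet> rv v < h v"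
    using strictly_convex_support_on_cone[OF assms(1) c(2)] by blast
  have "\<not> P \<subseteq> \<sigma>"
    using P face_in_cones[OF \<sigma>(1)] unfolding primitive_set_def by blast
  then obtain v where v: "v \<in> P" "v \<in> rays" "v \<notin> \<sigma>"
    using P unfolding primitive_set_def by blast
  have "0 < (\<Sum>\<rho>\<in>rays. of_int (c \<rho>) * (h \<rho> - m \<bullet> rv \<rho>))"
  proof (rule sum_pos2[OF finite_rays v(2)])
    show "0 < of_int (c v) * (h v - m \<bullet> rv v)"
      using v c(3) \<sigma>(4) by simp
    show "0 \<le> of_int (c \<rho>) * (h \<rho> - m \<bullet> rv \<rho>)" if "\<rho> \<in> rays" for \<rho>
    proof (cases "\<rho> \<in> \<tau>")
      case True
      then show ?thesis
        using \<sigma>(2,3) by auto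
    next
      case False
      then have "c \<rho> \<ge> 0"
        using that c(3,5) by (cases "\<rho> \<in> P") auto
      moreover have "h \<rho> - m \<bullet> rv \<rho> \<ge> 0"
        using that \<sigma>(3,4) by (cases "\<rho> \<in> \<sigma>") (auto simp: less_imp_le)
      ultimately show ?thesis
        by simp
    qed
  qed
  also have "\<dots> = divisor_degree rays h c"
    using divisor_degree_diff_linear[OF c(1)] unfolding divisor_degree_def .
  finally show ?thesis .
qed

lemma positive_support_not_cone:
  assumes "curve_class rays \<gamma>" "{\<rho>\<in>rays. \<gamma> \<rho> < 0} \<in> cones" "\<gamma> \<noteq> (\<lambda>_. 0)"
  shows "{\<rho>\<in>rays. \<gamma> \<rho> > 0} \<notin> cones"
proof
  define Pos where "Pos = {\<rho>\<in>rays. \<gamma> \<rho> > 0}"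
  define Neg where "Neg = {\<rho>\<in>rays. \<gamma> \<rho> < 0}"
  assume "{\<rho>\<in>rays. \<gamma> \<rho> > 0} \<in> cones"
  then have Pos: "Pos \<in> cones" and Neg: "Neg \<in> cones"
    using assms(2) unfolding Pos_def Neg_def by simp_all
  have "(\<Sum>\<rho>\<in>rays. of_int (\<gamma> \<rho>) *\<^sub>R rv \<rho>) = 0"
    using assms(1) unfolding curve_class_def by (simp flip: rv_lincomb)
  moreover have "(\<Sum>\<rho>\<in>rays. of_int (\<gamma> \<rho>) *\<^sub>R rv \<rho>) = (\<Sum>\<rho>\<in>Pos \<union> Neg. of_int (\<gamma> \<rho>) *\<^sub>R rv \<rho>)"
    using finite_rays unfolding Pos_def Neg_def
    by (intro sum.mono_neutral_right) auto
  moreover have "\<dots> = (\<Sum>\<rho>\<in>Pos. of_int (\<gamma> \<rho>) *\<^sub>R rv \<rho>) - (\<Sum>\<rho>\<in>Neg. (- of_int (\<gamma> \<rho>)) *\<^sub>R rv \<rho>)"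
    using finite_rays unfolding Pos_def Neg_def by (subst sum.union_disjoint) (auto simp: sum_negf)
  ultimately have balance:
    "(\<Sum>\<rho>\<in>Pos. of_int (\<gamma> \<rho>) *\<^sub>R rv \<rho>) = (\<Sum>\<rho>\<in>Neg. (- of_int (\<gamma> \<rho>)) *\<^sub>R rv \<rho>)"
    by simp
  have pos: "of_int (\<gamma> \<rho>) > (0::real)" if "\<rho> \<in> Pos" for \<rho>
    using that unfolding Pos_def by simp
  have neg: "- of_int (\<gamma> \<rho>) > (0::real)" if "\<rho> \<in> Neg" for \<rho>
    using that unfolding Neg_def by simp
  have "(\<Sum>\<rho>\<in>Neg. (- of_int (\<gamma> \<rho>)) *\<^sub>R rv \<rho>) \<in> poscone Neg"
    using neg by (intro lincomb_in_poscone) (simp add: less_imp_le)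
  then have "Pos \<subseteq> Neg"
    using relint_in_poscone_imp_subset[OF Pos Neg pos] balance by simp
  then have "Pos = {}"
    unfolding Pos_def Neg_def by auto
  then have "Neg \<subseteq> {}"
    using relint_in_poscone_imp_subset[OF Neg empty_in_cones neg] balance by simp
  then have "\<gamma> \<rho> = 0" for \<rho>
    using \<open>Pos = {}\<close> assms(1) unfolding Pos_def Neg_def curve_class_def
    by (cases "\<rho> \<in> rays") (auto simp: linorder_neq_iff)
  then show False
    using assms(3) by auto
qed

lemma exists_subtractable_primitive_class:
  assumes "curve_class rays \<gamma>" "{\<rho>\<in>rays. \<gamma> \<rho> < 0} \<in> cones" "\<gamma> \<noteq> (\<lambda>_. 0)"
    and C: "\<And>P. primitive_set rays cones P \<Longrightarrow> \<exists>c\<in>C. primitive_class rays cones P c"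
  obtains c where "c \<in> C" "curve_class rays (\<lambda>\<rho>. \<gamma> \<rho> - c \<rho>)"
    "{\<rho>\<in>rays. \<gamma> \<rho> - c \<rho> < 0} \<subseteq> {\<rho>\<in>rays. \<gamma> \<rho> < 0}"
proof -
  obtain P where P: "P \<subseteq> {\<rho>\<in>rays. \<gamma> \<rho> > 0}" "primitive_set rays cones P"
    by (rule non_cone_contains_primitive_set[OF _ _ positive_support_not_cone[OF assms(1-3)]])
      (use finite_rays in auto)
  then obtain c where c: "c \<in> C" "primitive_class rays cones P c"
    using C by blast
  have "\<gamma> \<rho> > 0" if "\<rho> \<in> P" for \<rho>
    using that P(1) by blast
  from curve_class_subtract_primitive_class[OF assms(1) c(2) this] show thesis
    by (rule that[OF c(1)])
qed

text \<open>A strictly convex support function, shifted by the linear function that agrees with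
  it on a maximal cone containing \<open>\<sigma>\<close>.\<close>

lemma exists_divisor_positive_on_primitive_classes:
  assumes "\<sigma> \<in> cones"
  obtains w where "\<And>\<rho>. \<rho> \<in> rays \<Longrightarrow> w \<rho> \<ge> 0" "\<And>\<rho>. \<rho> \<in> \<sigma> \<Longrightarrow> w \<rho> = 0"
    "\<And>P c. primitive_class rays cones P c \<Longrightarrow> divisor_degree rays w c > 0"
proof -
  obtain h where h: "strictly_convex_support rays cones h"
    by (rule exists_strictly_convex_support)
  obtain \<sigma>' m where \<sigma>': "\<sigma>' \<in> cones" "\<sigma> \<subseteq> \<sigma>'"
      "\<And>v. v \<in> \<sigma>' \<Longrightarrow> m \<bullet> rv v = h v" "\<And>v. v \<in> rays - \<sigma>' \<Longrightarrow> m \<bullet> rv v < h v"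
    using strictly_convex_support_on_cone[OF h assms] by blast
  show thesis
  proof (rule that[of "\<lambda>\<rho>. h \<rho> - m \<bullet> rv \<rho>"])
    show "h \<rho> - m \<bullet> rv \<rho> \<ge> 0" if "\<rho> \<in> rays" for \<rho>
      using that \<sigma>'(3,4) by (cases "\<rho> \<in> \<sigma>'") (auto simp: less_imp_le)
    show "h \<rho> - m \<bullet> rv \<rho> = 0" if "\<rho> \<in> \<sigma>" for \<rho>
      using that \<sigma>'(2,3) by auto
    show "divisor_degree rays (\<lambda>\<rho>. h \<rho> - m \<bullet> rv \<rho>) c > 0" if "primitive_class rays cones P c" for P c
    proof -
      have "curve_class rays c"
        using that unfolding primitive_class_def by blast
      then show ?thesis
        using primitive_class_degree_pos[OF h that] by (simp add: divisor_degree_diff_linear)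
    qed
  qed
qed

lemma primitive_class_choice:
  obtains C where "finite C" "\<forall>c\<in>C. \<exists>P. primitive_class rays cones P c"
    "\<And>P. primitive_set rays cones P \<Longrightarrow> \<exists>c\<in>C. primitive_class rays cones P c"
proof
  define pc where "pc P = (SOME c. primitive_class rays cones P c)" for P
  have pc: "primitive_class rays cones P (pc P)" if P: "primitive_set rays cones P" for P
  proof -
    obtain c where "primitive_class rays cones P c"
      by (rule primitive_class_exists[OF P])
    then show ?thesis
      unfolding pc_def by (rule someI[of "primitive_class rays cones P"])
  qed
  have "{P. primitive_set rays cones P} \<subseteq> Pow rays"
    unfolding primitive_set_def by blast
  then show "finite (pc ` {P. primitive_set rays cones P})"
    using finite_rays by (simp add: finite_subset)
  show "\<forall>c\<in>pc ` {P. primitive_set rays cones P}. \<exists>P. primitive_class rays cones P c"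
    using pc by blast
  show "\<exists>c\<in>pc ` {P. primitive_set rays cones P}. primitive_class rays cones P c"
    if "primitive_set rays cones P" for P
    using pc[OF that] that by blast
qed

end

theorem proposition2p3:
  fixes rays :: "(int^'n) set" and cones :: "(int^'n) set set" and \<beta> :: "int^'n \<Rightarrow> int"
  assumes "smooth_projective_fan rays cones"
    and "curve_class rays \<beta>"
    and "{\<rho>\<in>rays. \<beta> \<rho> < 0} \<in> cones"
  shows "\<exists>C k. finite C \<and>
           (\<forall>c\<in>C. \<exists>P. primitive_class rays cones P c) \<and>
           \<beta> = (\<lambda>\<rho>. \<Sum>c\<in>C. int (k c) * c \<rho>)"
proof -
  note fan = assms(1)
  define Neg where "Neg = {\<rho>\<in>rays. \<beta> \<rho> < 0}"
  obtain w where w: "\<And>\<rho>. \<rho> \<in> rays \<Longrightarrow> w \<rho> \<ge> 0" "\<And>\<rho>. \<rho> \<in> Neg \<Longrightarrow> w \<rho> = 0"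
      "\<And>P c. primitive_class rays cones P c \<Longrightarrow> divisor_degree rays w c > 0"
    using exists_divisor_positive_on_primitive_classes[OF fan assms(3)[folded Neg_def]] by blast
  obtain C where C: "finite C" "\<forall>c\<in>C. \<exists>P. primitive_class rays cones P c"
      "\<And>P. primitive_set rays cones P \<Longrightarrow> \<exists>c\<in>C. primitive_class rays cones P c"
    using primitive_class_choice[OF fan] by blast
  define Q where "Q \<gamma> \<longleftrightarrow> curve_class rays \<gamma> \<and> {\<rho>\<in>rays. \<gamma> \<rho> < 0} \<subseteq> Neg" for \<gamma>
  have "\<exists>k. \<beta> = (\<lambda>\<rho>. \<Sum>c\<in>C. int (k c) * c \<rho>)"
  proof (rule nonneg_int_combination_by_descent[where D = "divisor_degree rays w" and Q = Q])
    show "divisor_degree rays w \<gamma> \<ge> 0" if "Q \<gamma>" for \<gamma>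
      using that w(1,2) unfolding Q_def by (intro divisor_degree_nonneg) blast+
    show "\<exists>c\<in>C. Q (\<lambda>\<rho>. \<gamma> \<rho> - c \<rho>)" if \<gamma>: "Q \<gamma>" "\<gamma> \<noteq> (\<lambda>_. 0)" for \<gamma>
    proof -
      have "curve_class rays \<gamma>" "{\<rho>\<in>rays. \<gamma> \<rho> < 0} \<in> cones"
        using \<gamma>(1) face_in_cones[OF fan assms(3)] unfolding Q_def Neg_def by blast+
      then obtain c where "c \<in> C" "curve_class rays (\<lambda>\<rho>. \<gamma> \<rho> - c \<rho>)"
          "{\<rho>\<in>rays. \<gamma> \<rho> - c \<rho> < 0} \<subseteq> {\<rho>\<in>rays. \<gamma> \<rho> < 0}"
        by (rule exists_subtractable_primitive_class[OF fan _ _ \<gamma>(2) C(3)])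
      then show ?thesis
        using \<gamma>(1) unfolding Q_def by blast
    qed
  qed (use C w(3) assms(2) in \<open>auto simp: divisor_degree_diff Q_def Neg_def\<close>)
  then show ?thesis
    using C(1,2) by blast
qed

end
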